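(* Let $\{\tau_n\}_{n\ge1}$ be a nonnegative sequence and $\{a_n\}_{n\ge1}$ a non-decreasing strictly positive sequence. Suppose there are finite real constants $\theta\ge1$, $C>0$ and $N\ge2$ such that for all $n\ge N$, $$\frac{a_n^{2\theta}}{n^{\theta-1}}\sum_{k=n}^\infty\frac{k^\theta\tau_k}{a_k^{2\theta}}\le C\sum_{k=1}^{n-1}k\tau_k,$$ and $$\liminf_{n\to\infty}\inf_{k\ge n}\frac{a_k^2}{ka_n^2}\sum_{j=1}^{n-1}j\tau_j>0.$$ Then every random variable $X_1$ satisfying $\sum_{n=1}^\infty n\tau_nP(|X_1|\ge\varepsilon a_n)<\infty$ for all $\varepsilon>0$ also satisfies $\sum_{n=1}^\infty\tau_n e^{-\varepsilon^2a_n^2/(nT_{\varepsilon,n})}<\infty$ for all $\varepsilon>0$, where $T_{\varepsilon,n}=E[X_1^21_{\{|X_1|<\varepsilon a_n\}}]$ and $e^{-t/0}=0$ for $t>0$.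
   Context: "Positive" means nonnegative; "increasing" means non-decreasing. *)

theory Defs
  imports "HOL-Probability.Probability"
begin

definition exp_neg_quot :: "real \<Rightarrow> real \<Rightarrow> real" where
  "exp_neg_quot t s = (if s = 0 then 0 else exp (- t / s))"

end

theory Submission
  imports Defs
begin

text \<open>
  Fix \<epsilon> > 0. Since exp (-x) <= \<theta>^\<theta> x^(-\<theta>), it suffices to bound the partial sums of
  \<tau>_m y_m^\<theta>, where y_m = m T_m / (\<epsilon> a_m)^2 is the expectation of
  Z_m = m X^2 1{|X| < \<epsilon> a_m} / (\<epsilon> a_m)^2. Hoelder's inequality against the random weight
  G = 1 + \<Sum>_{j <= Q} j \<tau>_j 1{\<epsilon> a_j <= |X|}, whose expectation is bounded by the hypothesis on X,
  gives y_m^\<theta> <= (E G)^(\<theta> - 1) E [Z_m^\<theta> G^(1 - \<theta>)]; so it suffices to prove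
  \<Sum>_m \<tau>_m Z_m^\<theta> <= K G^\<theta> pointwise. With u = |X| / \<epsilon>, only indices m >= k contribute, where k is
  the first index with u < a_k, and G >= 1 + S_k with S_k = \<Sum>_{j < k} j \<tau>_j. For k >= N the first
  condition bounds the contribution by C k^(\<theta> - 1) S_k, and the second condition gives
  \<delta> k <= 1 + S_k, hence k^(\<theta> - 1) S_k <= \<delta>^(1 - \<theta>) G^\<theta>; for k < N we have u < a_N.
\<close>

lemma exp_neg_le_powr:
  fixes \<theta> x :: real
  assumes "\<theta> > 0" "x > 0"
  shows "exp (- x) \<le> \<theta> powr \<theta> * x powr (- \<theta>)"
proof -
  have "x / \<theta> \<le> exp (x / \<theta>)"
    using exp_ge_add_one_self[of "x / \<theta>"] by linarith
  then have "(x / \<theta>) powr \<theta> \<le> exp (x / \<theta>) powr \<theta>"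
    using assms by (intro powr_mono2) auto
  also have "\<dots> = exp x"
    using assms by (simp add: powr_def)
  finally have "1 / exp x \<le> 1 / (x / \<theta>) powr \<theta>"
    using assms by (intro divide_left_mono) auto
  then show ?thesis
    using assms by (simp add: exp_minus powr_divide powr_minus divide_simps)
qed

lemma exp_neg_quot_le_powr:
  fixes \<theta> t s :: real
  assumes "\<theta> > 0" "t > 0" "s \<ge> 0"
  shows "exp_neg_quot t s \<le> \<theta> powr \<theta> * (s / t) powr \<theta>"
proof (cases "s = 0")
  case False
  then have "exp_neg_quot t s = exp (- (t / s))"
    by (simp add: exp_neg_quot_def)
  also have "\<dots> \<le> \<theta> powr \<theta> * (t / s) powr (- \<theta>)"
    using assms False by (intro exp_neg_le_powr) auto
  also have "(t / s) powr (- \<theta>) = (s / t) powr \<theta>"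
    by (simp add: powr_minus_divide powr_divide)
  finally show ?thesis .
qed (simp add: exp_neg_quot_def)

lemma summable_exp_neg_quot_of_powr_sums_bounded:
  fixes \<tau> s t :: "nat \<Rightarrow> real" and \<theta> B :: real
  assumes \<theta>: "\<theta> > 0"
    and pos: "\<And>m. m \<ge> 1 \<Longrightarrow> 0 \<le> \<tau> m \<and> 0 \<le> s m \<and> 0 < t m"
    and bounded: "\<And>Q. (\<Sum>m\<in>{1..Q}. \<tau> m * (s m / t m) powr \<theta>) \<le> B"
  shows "summable (\<lambda>n. \<tau> (Suc n) * exp_neg_quot (t (Suc n)) (s (Suc n)))"
proof (rule summableI_nonneg_bounded)
  show "0 \<le> \<tau> (Suc n) * exp_neg_quot (t (Suc n)) (s (Suc n))" for n
    using pos[of "Suc n"] by (simp add: exp_neg_quot_def)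
  show "(\<Sum>i<Q. \<tau> (Suc i) * exp_neg_quot (t (Suc i)) (s (Suc i))) \<le> \<theta> powr \<theta> * B" for Q
  proof -
    have "(\<Sum>i<Q. \<tau> (Suc i) * exp_neg_quot (t (Suc i)) (s (Suc i)))
        \<le> (\<Sum>i<Q. \<tau> (Suc i) * (\<theta> powr \<theta> * (s (Suc i) / t (Suc i)) powr \<theta>))"
      using pos \<theta> by (intro sum_mono mult_left_mono exp_neg_quot_le_powr) auto
    also have "\<dots> = \<theta> powr \<theta> * (\<Sum>m\<in>{1..Q}. \<tau> m * (s m / t m) powr \<theta>)"
      unfolding sum.atLeast1_atMost_eq[folded One_nat_def] sum_distrib_left by (simp add: mult_ac)
    also have "\<dots> \<le> \<theta> powr \<theta> * B"
      using bounded by (intro mult_left_mono) auto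
    finally show ?thesis .
  qed
qed

lemma Youngs_inequality_weighted:
  fixes z g A B \<theta> :: real
  assumes "\<theta> \<ge> 1" "z \<ge> 0" "g > 0" "A > 0" "B > 0"
  shows "z \<le> A powr (1/\<theta>) * B powr (1 - 1/\<theta>) *
     ((1/\<theta>) * (z powr \<theta> * g powr (1 - \<theta>) / A) + (1 - 1/\<theta>) * (g / B))"
proof (cases "z = 0")
  case False
  let ?a = "z powr \<theta> * g powr (1 - \<theta>) / A" and ?b = "g / B"
  have "?a powr (1/\<theta>) * ?b powr (1 - 1/\<theta>) \<le> (1/\<theta>) * ?a + (1 - 1/\<theta>) * ?b"
    using assms False by (intro Youngs_inequality_0) auto
  moreover have "?a powr (1/\<theta>) = z * g powr ((1 - \<theta>)/\<theta>) / A powr (1/\<theta>)"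
    using assms False by (simp add: powr_divide powr_mult powr_powr)
  moreover have "?b powr (1 - 1/\<theta>) = g powr (1 - 1/\<theta>) / B powr (1 - 1/\<theta>)"
    by (simp add: powr_divide)
  moreover have "g powr ((1 - \<theta>)/\<theta>) * g powr (1 - 1/\<theta>) = 1"
  proof -
    have "(1 - \<theta>)/\<theta> + (1 - 1/\<theta>) = 0"
      using assms by (simp add: field_simps)
    then show ?thesis
      using assms by (simp flip: powr_add)
  qed
  ultimately have "z / (A powr (1/\<theta>) * B powr (1 - 1/\<theta>))
      \<le> (1/\<theta>) * ?a + (1 - 1/\<theta>) * ?b"
    by (simp add: field_simps)
  then show ?thesis
    using assms by (simp add: divide_le_eq mult.commute)
qed (use assms in \<open>simp add: divide_simps\<close>)

lemma Holder_inequality_weighted: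
  fixes Z G :: "'a \<Rightarrow> real" and \<theta> :: real
  assumes \<theta>: "\<theta> \<ge> 1"
    and Z: "\<And>x. x \<in> space M \<Longrightarrow> 0 \<le> Z x" and G: "\<And>x. x \<in> space M \<Longrightarrow> 0 < G x"
    and int_Z: "integrable M Z" and int_G: "integrable M G"
    and int_W: "integrable M (\<lambda>x. Z x powr \<theta> * G x powr (1 - \<theta>))"
  shows "(\<integral>x. Z x \<partial>M) powr \<theta>
    \<le> (\<integral>x. G x \<partial>M) powr (\<theta> - 1) * (\<integral>x. Z x powr \<theta> * G x powr (1 - \<theta>) \<partial>M)"
proof -
  define A where "A = (\<integral>x. Z x powr \<theta> * G x powr (1 - \<theta>) \<partial>M)"
  define B where "B = (\<integral>x. G x \<partial>M)"
  have "A \<ge> 0" "B \<ge> 0"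
    unfolding A_def B_def using G by (auto intro!: integral_nonneg_AE AE_I2 simp: less_imp_le)
  show ?thesis
  proof (cases "A > 0 \<and> B > 0")
    case False
    have "AE x in M. Z x = 0"
    proof (cases "A = 0")
      case True
      then have "AE x in M. Z x powr \<theta> * G x powr (1 - \<theta>) = 0"
        using int_W unfolding A_def by (subst integral_nonneg_eq_0_iff_AE[symmetric]) auto
      then show ?thesis
        using AE_space by eventually_elim (auto dest: G)
    next
      case False
      with \<open>A \<ge> 0\<close> \<open>B \<ge> 0\<close> \<open>\<not> (A > 0 \<and> B > 0)\<close> have "B = 0" by simp
      then have "AE x in M. G x = 0"
        using int_G G unfolding B_def by (subst integral_nonneg_eq_0_iff_AE[symmetric]) (auto intro!: AE_I2 less_imp_le)
      then show ?thesis
        using AE_space by eventually_elim (metis G less_irrefl)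
    qed
    then have "(\<integral>x. Z x \<partial>M) = 0"
      by (simp add: integral_eq_zero_AE)
    then show ?thesis
      using \<theta> \<open>A \<ge> 0\<close> by (simp add: A_def)
  next
    case True
    define D where "D = A powr (1/\<theta>) * B powr (1 - 1/\<theta>)"
    have "(\<integral>x. Z x \<partial>M) \<le> (\<integral>x. D * ((1/\<theta>) * (Z x powr \<theta> * G x powr (1 - \<theta>) / A)
        + (1 - 1/\<theta>) * (G x / B)) \<partial>M)"
      unfolding D_def using True \<theta> Z G int_Z int_W int_G
      by (intro integral_mono Youngs_inequality_weighted) auto
    also have "\<dots> = D"
      using True int_W int_G by (simp add: A_def B_def)
    finally have "(\<integral>x. Z x \<partial>M) powr \<theta> \<le> D powr \<theta>"
      using \<theta> Z by (intro powr_mono2 integral_nonneg_AE AE_I2) auto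
    also have "D powr \<theta> = B powr (\<theta> - 1) * A"
    proof -
      have "(1 - 1/\<theta>) * \<theta> = \<theta> - 1"
        using \<theta> by (simp add: field_simps)
      then show ?thesis
        using True \<theta> by (simp add: D_def powr_mult powr_powr)
    qed
    finally show ?thesis
      by (simp add: A_def B_def)
  qed
qed

lemma sum_integral_powr_le:
  fixes Z :: "'i \<Rightarrow> 'a \<Rightarrow> real" and G :: "'a \<Rightarrow> real" and c :: "'i \<Rightarrow> real"
  assumes "finite_measure M" and \<theta>: "\<theta> \<ge> 1" and "finite I"
    and c: "\<And>i. i \<in> I \<Longrightarrow> 0 \<le> c i"
    and Z_meas: "\<And>i. i \<in> I \<Longrightarrow> Z i \<in> borel_measurable M" and G_meas: "G \<in> borel_measurable M"
    and Z_bound: "\<And>i x. i \<in> I \<Longrightarrow> x \<in> space M \<Longrightarrow> 0 \<le> Z i x \<and> Z i x \<le> b"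
    and G_bound: "\<And>x. x \<in> space M \<Longrightarrow> 1 \<le> G x \<and> G x \<le> b"
    and pointwise: "\<And>x. x \<in> space M \<Longrightarrow> (\<Sum>i\<in>I. c i * Z i x powr \<theta>) \<le> K * G x powr \<theta>"
  shows "(\<Sum>i\<in>I. c i * (\<integral>x. Z i x \<partial>M) powr \<theta>) \<le> K * (\<integral>x. G x \<partial>M) powr \<theta>"
proof -
  interpret finite_measure M by fact
  define W where "W i = (\<lambda>x. Z i x powr \<theta> * G x powr (1 - \<theta>))" for i
  define B where "B = (\<integral>x. G x \<partial>M)"
  have "B \<ge> 0"
    unfolding B_def using G_bound by (intro integral_nonneg_AE AE_I2) (auto intro: order_trans[OF zero_le_one])
  have int_Z: "integrable M (Z i)" if "i \<in> I" for i
    using Z_meas Z_bound that by (intro integrable_const_bound[where B=b] AE_I2) auto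
  have int_G: "integrable M G"
    using G_meas G_bound by (intro integrable_const_bound[where B=b] AE_I2) fastforce+
  have int_W: "integrable M (W i)" if i: "i \<in> I" for i
  proof (rule integrable_const_bound[where B="b powr \<theta>"])
    show "AE x in M. norm (W i x) \<le> b powr \<theta>"
    proof (rule AE_I2)
      fix x assume x: "x \<in> space M"
      have "G x powr (1 - \<theta>) \<le> G x powr 0"
        using G_bound[OF x] \<theta> by (intro powr_mono) auto
      moreover have "Z i x powr \<theta> \<le> b powr \<theta>"
        using Z_bound[OF i x] \<theta> by (intro powr_mono2) auto
      ultimately have "W i x \<le> b powr \<theta> * 1"
        using G_bound[OF x] unfolding W_def by (intro mult_mono) auto
      then show "norm (W i x) \<le> b powr \<theta>"
        by (simp add: W_def)
    qed
  qed (use Z_meas[OF i] G_meas in \<open>unfold W_def, measurable\<close>)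
  have Holder: "(\<integral>x. Z i x \<partial>M) powr \<theta> \<le> B powr (\<theta> - 1) * (\<integral>x. W i x \<partial>M)" if i: "i \<in> I" for i
    unfolding B_def W_def
    by (rule Holder_inequality_weighted[OF \<theta>])
      (use Z_bound[OF i] G_bound int_Z[OF i] int_G int_W[OF i] in \<open>force simp: W_def\<close>)+
  have "(\<Sum>i\<in>I. c i * (\<integral>x. Z i x \<partial>M) powr \<theta>) \<le> (\<Sum>i\<in>I. c i * (B powr (\<theta> - 1) * (\<integral>x. W i x \<partial>M)))"
    using Holder c by (intro sum_mono mult_left_mono) auto
  also have "\<dots> = B powr (\<theta> - 1) * (\<integral>x. (\<Sum>i\<in>I. c i * W i x) \<partial>M)"
    using int_W by (simp add: sum_distrib_left mult.left_commute)
  also have "\<dots> \<le> B powr (\<theta> - 1) * (\<integral>x. K * G x \<partial>M)"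
  proof (intro mult_left_mono integral_mono)
    fix x assume x: "x \<in> space M"
    have "(\<Sum>i\<in>I. c i * W i x) = G x powr (1 - \<theta>) * (\<Sum>i\<in>I. c i * Z i x powr \<theta>)"
      by (simp add: W_def sum_distrib_left mult_ac)
    also have "\<dots> \<le> G x powr (1 - \<theta>) * (K * G x powr \<theta>)"
      using pointwise[OF x] by (intro mult_left_mono) auto
    also have "\<dots> = K * G x"
      using G_bound[OF x] by (simp flip: powr_add)
    finally show "(\<Sum>i\<in>I. c i * W i x) \<le> K * G x" .
  qed (use int_W int_G in auto)
  also have "\<dots> = K * B powr \<theta>"
    using powr_mult_base[OF \<open>B \<ge> 0\<close>, of "\<theta> - 1"] by (simp add: B_def[symmetric] mult_ac)
  finally show ?thesis
    by (simp add: B_def)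
qed

lemma integral_one_plus_sum_if:
  assumes "prob_space M" "finite J" and sets: "\<And>j. {x \<in> space M. P j x} \<in> sets M"
  shows "(\<integral>x. 1 + (\<Sum>j\<in>J. if P j x then c j else 0) \<partial>M) = 1 + (\<Sum>j\<in>J. c j * measure M {x \<in> space M. P j x})"
proof -
  interpret prob_space M by fact
  define A where "A j = {x \<in> space M. P j x}" for j
  have int_A: "integrable M (\<lambda>x. c j * indicator (A j) x)" for j
    unfolding A_def using sets by (intro integrable_mult_right integrable_real_indicator) (auto simp: less_top[symmetric])
  have "(\<integral>x. 1 + (\<Sum>j\<in>J. if P j x then c j else 0) \<partial>M) = (\<integral>x. 1 + (\<Sum>j\<in>J. c j * indicator (A j) x) \<partial>M)"
    unfolding A_def by (intro Bochner_Integration.integral_cong arg_cong[where f="(+) 1"] sum.cong)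
      (auto simp: indicator_def)
  also have "\<dots> = (\<integral>x. 1 \<partial>M) + (\<integral>x. (\<Sum>j\<in>J. c j * indicator (A j) x) \<partial>M)"
    by (rule Bochner_Integration.integral_add[OF integrable_const Bochner_Integration.integrable_sum[OF int_A]])
  also have "(\<integral>x. (\<Sum>j\<in>J. c j * indicator (A j) x) \<partial>M) = (\<Sum>j\<in>J. (\<integral>x. c j * indicator (A j) x \<partial>M))"
    by (rule Bochner_Integration.integral_sum[OF int_A])
  finally show ?thesis
    using sets by (simp add: prob_space A_def Int_absorb2)
qed

lemma ex_linear_lower_bound:
  fixes s :: "nat \<Rightarrow> real"
  assumes liminf: "liminf (\<lambda>n. ereal (s n / real n)) > 0" and s: "\<And>n. s n \<ge> 0"
  shows "\<exists>\<delta>>0. \<forall>n\<ge>1. \<delta> * real n \<le> 1 + s n"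
proof -
  obtain r where r: "0 < r" "ereal r < liminf (\<lambda>n. ereal (s n / real n))"
    using ereal_dense2[OF liminf] by auto
  then obtain n0 where n0: "\<And>n. n \<ge> n0 \<Longrightarrow> r < s n / real n"
    using less_LiminfD[OF r(2)] by (auto simp: eventually_sequentially)
  define n1 where "n1 = max n0 1"
  have "min r (1 / real n1) * real n \<le> 1 + s n" if "n \<ge> 1" for n
  proof (cases "n \<ge> n1")
    case True
    then have "n \<ge> n0" "real n > 0"
      using that by (auto simp: n1_def)
    then have "r * real n \<le> s n"
      using n0[of n] by (simp add: pos_less_divide_eq less_imp_le)
    then show ?thesis
      using s[of n] by (smt (verit) min.cobounded1 mult_right_mono of_nat_0_le_iff)
  next
    case False
    moreover have "n1 \<ge> 1"
      by (simp add: n1_def)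
    ultimately have "(1 / real n1) * real n \<le> 1"
      by (simp add: field_simps)
    then show ?thesis
      using s[of n] by (smt (verit) min.cobounded2 mult_right_mono of_nat_0_le_iff)
  qed
  moreover have "min r (1 / real n1) > 0"
    using r by (simp add: n1_def)
  ultimately show ?thesis
    by blast
qed

lemma power2_powr: "0 \<le> x \<Longrightarrow> (x ^ 2) powr t = x powr (2 * t)" for x t :: real
  using powr_powr[of x 2 t] by simp

locale tail_head_condition =
  fixes \<tau> a :: "nat \<Rightarrow> real" and \<theta> C :: real and N :: nat
  assumes tau_nonneg: "n \<ge> 1 \<Longrightarrow> \<tau> n \<ge> 0"
    and a_pos: "n \<ge> 1 \<Longrightarrow> a n > 0"
    and a_mono: "1 \<le> m \<Longrightarrow> m \<le> n \<Longrightarrow> a m \<le> a n"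
    and theta: "\<theta> \<ge> 1" and C_nonneg: "C \<ge> 0"
    and tail_head: "n \<ge> N \<Longrightarrow>
        summable (\<lambda>i. real (i + n) powr \<theta> * \<tau> (i + n) / a (i + n) powr (2 * \<theta>)) \<and>
        a n powr (2 * \<theta>) / real n powr (\<theta> - 1)
          * (\<Sum>i. real (i + n) powr \<theta> * \<tau> (i + n) / a (i + n) powr (2 * \<theta>))
        \<le> C * (\<Sum>k\<in>{1..<n}. real k * \<tau> k)"
begin

definition weight :: "nat \<Rightarrow> real" where
  "weight m = real m powr \<theta> * \<tau> m / a m powr (2 * \<theta>)"

definition head_sum :: "nat \<Rightarrow> real" where
  "head_sum n = (\<Sum>k\<in>{1..<n}. real k * \<tau> k)"

lemma weight_nonneg: "0 \<le> weight m"
  using tau_nonneg[of m] by (cases "m = 0") (auto simp: weight_def)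

lemma head_sum_nonneg: "0 \<le> head_sum n"
  unfolding head_sum_def using tau_nonneg by (intro sum_nonneg) auto

lemma tail_weight_le:
  assumes "n \<ge> N"
  shows "summable (\<lambda>i. weight (i + n))"
    and "a n powr (2 * \<theta>) / real n powr (\<theta> - 1) * (\<Sum>i. weight (i + n)) \<le> C * head_sum n"
  using tail_head[OF assms] by (simp_all add: weight_def head_sum_def)

lemma summable_weight: "summable weight"
  using tail_weight_le(1)[of N] by simp

lemma weight_powr_eq:
  assumes "m \<ge> 1" "u \<ge> 0"
  shows "\<tau> m * (real m * u ^ 2 / a m ^ 2) powr \<theta> = u powr (2 * \<theta>) * weight m"
  using assms a_pos[of m] by (simp add: weight_def powr_mult powr_divide power2_powr)

lemma head_sum_linear_lower_bound:
  assumes "liminf (\<lambda>n. INF k\<in>{n..}.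
      ereal (a k ^ 2 / (real k * a n ^ 2) * (\<Sum>j\<in>{1..<n}. real j * \<tau> j))) > 0"
  shows "\<exists>\<delta>>0. \<forall>n\<ge>1. \<delta> * real n \<le> 1 + head_sum n"
proof (rule ex_linear_lower_bound[OF _ head_sum_nonneg])
  have "\<forall>\<^sub>F n in sequentially. (INF k\<in>{n..}.
      ereal (a k ^ 2 / (real k * a n ^ 2) * (\<Sum>j\<in>{1..<n}. real j * \<tau> j)))
      \<le> ereal (head_sum n / real n)"
  proof (rule eventually_sequentiallyI)
    fix n :: nat assume "n \<ge> 1"
    then have "a n ^ 2 / (real n * a n ^ 2) * head_sum n = head_sum n / real n"
      using a_pos[of n] by simp
    moreover have "(INF k\<in>{n..}. ereal (a k ^ 2 / (real k * a n ^ 2) * (\<Sum>j\<in>{1..<n}. real j * \<tau> j)))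
      \<le> ereal (a n ^ 2 / (real n * a n ^ 2) * head_sum n)"
      unfolding head_sum_def by (rule INF_lower) simp
    ultimately show "(INF k\<in>{n..}. ereal (a k ^ 2 / (real k * a n ^ 2) * (\<Sum>j\<in>{1..<n}. real j * \<tau> j)))
      \<le> ereal (head_sum n / real n)"
      by simp
  qed
  then show "liminf (\<lambda>n. ereal (head_sum n / real n)) > 0"
    by (rule less_le_trans[OF assms Liminf_mono])
qed

lemma tail_estimate_beyond_N:
  assumes k: "N \<le> k" "1 \<le> k" and u: "0 \<le> u" "u < a k"
    and g: "\<delta> > 0" "\<delta> * real k \<le> g" "head_sum k \<le> g"
  shows "u powr (2 * \<theta>) * (\<Sum>m\<in>{k..Q}. weight m) \<le> C * \<delta> powr (1 - \<theta>) * g powr \<theta>"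
proof -
  have "0 < \<delta> * real k"
    using g(1) k(2) by simp
  then have "g > 0"
    using g(2) by linarith
  have "(\<Sum>m\<in>{k..Q}. weight m) \<le> (\<Sum>i. weight (i + k))"
  proof (cases "k \<le> Q")
    case True
    have "(\<Sum>m\<in>{k..Q}. weight m) = (\<Sum>i\<in>{0..Q - k}. weight (i + k))"
      using sum.atLeastAtMost_shift_0[OF True, of weight] by (simp add: comp_def add.commute)
    also have "\<dots> \<le> (\<Sum>i. weight (i + k))"
      using tail_weight_le(1)[OF k(1)] by (intro sum_le_suminf) (auto simp: weight_nonneg)
    finally show ?thesis .
  qed (use tail_weight_le(1)[OF k(1)] in \<open>auto intro: suminf_nonneg weight_nonneg\<close>)
  then have "u powr (2 * \<theta>) * (\<Sum>m\<in>{k..Q}. weight m) \<le> a k powr (2 * \<theta>) * (\<Sum>i. weight (i + k))"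
    using u theta by (intro mult_mono powr_mono2) (auto intro: sum_nonneg weight_nonneg)
  also have "\<dots> \<le> C * head_sum k * real k powr (\<theta> - 1)"
  proof -
    have "real k powr (\<theta> - 1) > 0"
      using k(2) by simp
    with tail_weight_le(2)[OF k(1)] show ?thesis
      by (simp add: pos_divide_le_eq mult.commute mult.left_commute)
  qed
  also have "\<dots> \<le> C * g * (g / \<delta>) powr (\<theta> - 1)"
  proof (intro mult_mono mult_left_mono powr_mono2)
    show "real k \<le> g / \<delta>"
      using g by (simp add: pos_le_divide_eq mult.commute)
  qed (use g theta C_nonneg head_sum_nonneg \<open>g > 0\<close> in auto)
  also have "\<dots> = C * \<delta> powr (1 - \<theta>) * g powr \<theta>"
  proof -
    have "g * (g / \<delta>) powr (\<theta> - 1) = g powr \<theta> / \<delta> powr (\<theta> - 1)"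
      using powr_mult_base[of g "\<theta> - 1"] \<open>g > 0\<close> by (simp add: powr_divide)
    moreover have "1 / \<delta> powr (\<theta> - 1) = \<delta> powr (1 - \<theta>)"
      using powr_minus_divide[of \<delta> "\<theta> - 1"] by simp
    ultimately show ?thesis
      by (metis (no_types, lifting) mult.assoc mult.commute times_divide_eq_right mult_1)
  qed
  finally show ?thesis .
qed

lemma tail_estimate:
  assumes k: "1 \<le> k" and u: "0 \<le> u" "u < a k"
    and \<delta>: "\<delta> > 0" "\<forall>n\<ge>1. \<delta> * real n \<le> 1 + head_sum n" and g: "1 + head_sum k \<le> g"
  shows "u powr (2 * \<theta>) * (\<Sum>m\<in>{k..Q}. weight m)
    \<le> (C * \<delta> powr (1 - \<theta>) + a N powr (2 * \<theta>) * suminf weight) * g powr \<theta>"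
proof -
  have K: "0 \<le> C * \<delta> powr (1 - \<theta>)" "0 \<le> a N powr (2 * \<theta>) * suminf weight"
    using C_nonneg suminf_nonneg[OF summable_weight weight_nonneg] by auto
  have "1 \<le> g powr \<theta>"
    using g head_sum_nonneg[of k] theta by (intro ge_one_powr_ge_zero) auto
  show ?thesis
  proof (cases "N \<le> k")
    case True
    have "\<delta> * real k \<le> g"
      using \<delta>(2) k g by force
    then have "u powr (2 * \<theta>) * (\<Sum>m\<in>{k..Q}. weight m) \<le> C * \<delta> powr (1 - \<theta>) * g powr \<theta>"
      using tail_estimate_beyond_N[OF True k u \<delta>(1)] g by simp
    then show ?thesis
      using K by (simp add: distrib_right add_increasing2)
  next
    case False
    have "u powr (2 * \<theta>) \<le> a N powr (2 * \<theta>)"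
      using a_mono[OF k, of N] False u theta by (intro powr_mono2) auto
    moreover have "(\<Sum>m\<in>{k..Q}. weight m) \<le> suminf weight"
      using summable_weight by (intro sum_le_suminf) (auto simp: weight_nonneg)
    ultimately have "u powr (2 * \<theta>) * (\<Sum>m\<in>{k..Q}. weight m) \<le> a N powr (2 * \<theta>) * suminf weight"
      by (intro mult_mono) (auto intro: sum_nonneg weight_nonneg)
    also have "\<dots> \<le> a N powr (2 * \<theta>) * suminf weight * g powr \<theta>"
      using K(2) \<open>1 \<le> g powr \<theta>\<close> by (simp add: mult_le_cancel_left1)
    finally show ?thesis
      using K \<open>1 \<le> g powr \<theta>\<close> by (simp add: distrib_right add_increasing)
  qed
qed

lemma tail_head_estimate:
  assumes u: "0 \<le> u" and \<delta>: "\<delta> > 0" "\<forall>n\<ge>1. \<delta> * real n \<le> 1 + head_sum n"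
  shows "u powr (2 * \<theta>) * sum weight {m\<in>{1..Q}. u < a m}
    \<le> (C * \<delta> powr (1 - \<theta>) + a N powr (2 * \<theta>) * suminf weight)
      * (1 + (\<Sum>j\<in>{j\<in>{1..Q}. a j \<le> u}. real j * \<tau> j)) powr \<theta>"
proof (cases "{m\<in>{1..Q}. u < a m} = {}")
  case True
  have "0 \<le> C * \<delta> powr (1 - \<theta>) + a N powr (2 * \<theta>) * suminf weight"
    using C_nonneg suminf_nonneg[OF summable_weight weight_nonneg] by auto
  then show ?thesis
    unfolding True by simp
next
  case False
  define P where "P = {m\<in>{1..Q}. u < a m}"
  define k where "k = Min P"
  have "finite P"
    by (simp add: P_def)
  moreover have "P \<noteq> {}"
    unfolding P_def by (fact False)
  ultimately have "k \<in> P"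
    unfolding k_def by (rule Min_in)
  then have k: "1 \<le> k" "u < a k"
    by (auto simp: P_def)
  have P_sub: "P \<subseteq> {k..Q}"
  proof
    fix m assume "m \<in> P"
    then show "m \<in> {k..Q}"
      using \<open>finite P\<close> by (simp add: k_def) (simp add: P_def)
  qed
  have "{1..<k} \<subseteq> {j\<in>{1..Q}. a j \<le> u}"
  proof
    fix j assume j: "j \<in> {1..<k}"
    then have "j \<notin> P"
      using \<open>finite P\<close> k_def by (meson Min_le atLeastLessThan_iff leD)
    then show "j \<in> {j\<in>{1..Q}. a j \<le> u}"
      using j P_sub \<open>k \<in> P\<close> by (auto simp: P_def)
  qed
  then have "head_sum k \<le> (\<Sum>j\<in>{j\<in>{1..Q}. a j \<le> u}. real j * \<tau> j)"
    unfolding head_sum_def using tau_nonneg by (intro sum_mono2) auto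
  moreover have "u powr (2 * \<theta>) * sum weight P \<le> u powr (2 * \<theta>) * (\<Sum>m\<in>{k..Q}. weight m)"
    using P_sub by (intro mult_left_mono sum_mono2) (auto simp: weight_nonneg)
  ultimately show ?thesis
    unfolding P_def using tail_estimate[OF k(1) u k(2) \<delta>] by (meson add_left_mono order_trans)
qed

lemma truncated_powr_sum_le:
  assumes \<epsilon>: "\<epsilon> > 0"
    and pointwise: "\<And>u. 0 \<le> u \<Longrightarrow> u powr (2 * \<theta>) * sum weight {m\<in>{1..Q}. u < a m}
        \<le> K * (1 + (\<Sum>j\<in>{j\<in>{1..Q}. a j \<le> u}. real j * \<tau> j)) powr \<theta>"
  shows "(\<Sum>m\<in>{1..Q}. \<tau> m * (if \<bar>y\<bar> < \<epsilon> * a m then real m * y^2 / (\<epsilon>^2 * a m ^ 2) else 0) powr \<theta>)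
    \<le> K * (1 + (\<Sum>j\<in>{1..Q}. if \<epsilon> * a j \<le> \<bar>y\<bar> then real j * \<tau> j else 0)) powr \<theta>"
proof -
  define u where "u = \<bar>y\<bar> / \<epsilon>"
  have u: "0 \<le> u" "\<And>c. \<bar>y\<bar> < \<epsilon> * c \<longleftrightarrow> u < c" "\<And>c. \<epsilon> * c \<le> \<bar>y\<bar> \<longleftrightarrow> c \<le> u"
    using \<epsilon> by (auto simp: u_def field_simps)
  have "(\<Sum>m\<in>{1..Q}. \<tau> m * (if \<bar>y\<bar> < \<epsilon> * a m then real m * y^2 / (\<epsilon>^2 * a m ^ 2) else 0) powr \<theta>)
      = (\<Sum>m\<in>{1..Q}. if u < a m then u powr (2 * \<theta>) * weight m else 0)"
  proof (intro sum.cong refl)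
    fix m assume "m \<in> {1..Q}"
    moreover have "real m * y^2 / (\<epsilon>^2 * a m ^ 2) = real m * u ^ 2 / a m ^ 2"
      using \<epsilon> by (simp add: u_def power_divide)
    ultimately show "\<tau> m * (if \<bar>y\<bar> < \<epsilon> * a m then real m * y^2 / (\<epsilon>^2 * a m ^ 2) else 0) powr \<theta>
        = (if u < a m then u powr (2 * \<theta>) * weight m else 0)"
      using weight_powr_eq[of m u] u by simp
  qed
  also have "\<dots> = u powr (2 * \<theta>) * (\<Sum>m\<in>{1..Q}. if u < a m then weight m else 0)"
    unfolding sum_distrib_left by (intro sum.cong) auto
  also have "\<dots> = u powr (2 * \<theta>) * sum weight {m\<in>{1..Q}. u < a m}"
    by (simp only: sum.inter_filter[OF finite_atLeastAtMost])
  also have "\<dots> \<le> K * (1 + (\<Sum>j\<in>{j\<in>{1..Q}. a j \<le> u}. real j * \<tau> j)) powr \<theta>"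
    using pointwise u(1) .
  also have "(\<Sum>j\<in>{j\<in>{1..Q}. a j \<le> u}. real j * \<tau> j)
      = (\<Sum>j\<in>{1..Q}. if \<epsilon> * a j \<le> \<bar>y\<bar> then real j * \<tau> j else 0)"
    by (simp only: sum.inter_filter[OF finite_atLeastAtMost] u(3))
  finally show ?thesis .
qed

lemma truncated_second_moments_le:
  fixes M :: "'s measure" and X :: "'s \<Rightarrow> real"
  assumes M: "prob_space M" and X: "X \<in> borel_measurable M" and \<epsilon>: "\<epsilon> > 0"
    and pointwise: "\<And>u. 0 \<le> u \<Longrightarrow> u powr (2 * \<theta>) * sum weight {m\<in>{1..Q}. u < a m}
        \<le> K * (1 + (\<Sum>j\<in>{j\<in>{1..Q}. a j \<le> u}. real j * \<tau> j)) powr \<theta>"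
  shows "(\<Sum>m\<in>{1..Q}. \<tau> m * (real m * (\<integral>x. (X x)^2 * indicator {y \<in> space M. \<bar>X y\<bar> < \<epsilon> * a m} x \<partial>M)
      / (\<epsilon>^2 * a m ^ 2)) powr \<theta>)
    \<le> K * (1 + (\<Sum>j\<in>{1..Q}. real j * \<tau> j * measure M {x \<in> space M. \<bar>X x\<bar> \<ge> \<epsilon> * a j})) powr \<theta>"
proof -
  interpret prob_space M by (fact M)
  define Z where "Z m x = (if \<bar>X x\<bar> < \<epsilon> * a m then real m * (X x)^2 / (\<epsilon>^2 * a m ^ 2) else 0)" for m x
  define G where "G x = 1 + (\<Sum>j\<in>{1..Q}. if \<epsilon> * a j \<le> \<bar>X x\<bar> then real j * \<tau> j else 0)" for x
  define b where "b = real Q + 1 + (\<Sum>j\<in>{1..Q}. real j * \<tau> j)"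
  have Z_bound: "0 \<le> Z m x \<and> Z m x \<le> b" if m: "m \<in> {1..Q}" for m x
  proof -
    have "a m > 0"
      using a_pos m by simp
    have "(X x)^2 \<le> (\<epsilon> * a m)^2" if "\<bar>X x\<bar> < \<epsilon> * a m"
      using that by (metis abs_ge_zero less_imp_le power2_abs power_mono)
    then have "Z m x \<le> real m"
      using \<epsilon> \<open>a m > 0\<close> by (simp add: Z_def divide_le_eq power_mult_distrib mult_left_mono)
    moreover have "real m \<le> b"
      using m tau_nonneg by (auto simp: b_def intro!: sum_nonneg add_increasing2)
    ultimately show ?thesis
      by (simp add: Z_def)
  qed
  have G_bound: "1 \<le> G x \<and> G x \<le> b" for x
  proof -
    have "0 \<le> (\<Sum>j\<in>{1..Q}. if \<epsilon> * a j \<le> \<bar>X x\<bar> then real j * \<tau> j else 0)"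
      using tau_nonneg by (intro sum_nonneg) auto
    moreover have "(\<Sum>j\<in>{1..Q}. if \<epsilon> * a j \<le> \<bar>X x\<bar> then real j * \<tau> j else 0) \<le> (\<Sum>j\<in>{1..Q}. real j * \<tau> j)"
      using tau_nonneg by (intro sum_mono) auto
    ultimately show ?thesis
      by (simp add: G_def b_def)
  qed
  have "(\<Sum>m\<in>{1..Q}. \<tau> m * (\<integral>x. Z m x \<partial>M) powr \<theta>) \<le> K * (\<integral>x. G x \<partial>M) powr \<theta>"
  proof (rule sum_integral_powr_le[OF finite_measure theta finite_atLeastAtMost])
    show "Z m \<in> borel_measurable M" for m
      unfolding Z_def using X by measurable
    show "G \<in> borel_measurable M"
      unfolding G_def using X by measurable
    show "(\<Sum>m\<in>{1..Q}. \<tau> m * Z m x powr \<theta>) \<le> K * G x powr \<theta>" for x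
      unfolding Z_def G_def using \<epsilon> pointwise by (rule truncated_powr_sum_le)
  qed (use tau_nonneg Z_bound G_bound in auto)
  moreover have "(\<integral>x. Z m x \<partial>M) = real m * (\<integral>x. (X x)^2 * indicator {y \<in> space M. \<bar>X y\<bar> < \<epsilon> * a m} x \<partial>M)
      / (\<epsilon>^2 * a m ^ 2)" for m
  proof -
    have "(\<integral>x. Z m x \<partial>M) = (\<integral>x. real m / (\<epsilon>^2 * a m ^ 2) * ((X x)^2 * indicator {y \<in> space M. \<bar>X y\<bar> < \<epsilon> * a m} x) \<partial>M)"
      by (intro Bochner_Integration.integral_cong) (auto simp: Z_def indicator_def)
    then show ?thesis
      by simp
  qed
  moreover have "(\<integral>x. G x \<partial>M) = 1 + (\<Sum>j\<in>{1..Q}. real j * \<tau> j * measure M {x \<in> space M. \<bar>X x\<bar> \<ge> \<epsilon> * a j})"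
    unfolding G_def using X by (intro integral_one_plus_sum_if[OF M finite_atLeastAtMost]) measurable
  ultimately show ?thesis
    by simp
qed

lemma truncated_moment_sums_bounded:
  fixes M :: "'s measure" and X :: "'s \<Rightarrow> real"
  assumes M: "prob_space M" and X: "X \<in> borel_measurable M" and \<epsilon>: "\<epsilon> > 0"
    and \<delta>: "\<delta> > 0" "\<forall>n\<ge>1. \<delta> * real n \<le> 1 + head_sum n"
    and tail_prob: "summable (\<lambda>n. real (Suc n) * \<tau> (Suc n) *
        measure M {x \<in> space M. \<bar>X x\<bar> \<ge> \<epsilon> * a (Suc n)})"
  shows "\<exists>B. \<forall>Q. (\<Sum>m\<in>{1..Q}. \<tau> m *
      (real m * (\<integral>x. (X x)^2 * indicator {y \<in> space M. \<bar>X y\<bar> < \<epsilon> * a m} x \<partial>M)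
        / (\<epsilon>^2 * a m ^ 2)) powr \<theta>) \<le> B"
proof -
  define K where "K = C * \<delta> powr (1 - \<theta>) + a N powr (2 * \<theta>) * suminf weight"
  define L where "L = (\<Sum>n. real (Suc n) * \<tau> (Suc n) * measure M {x \<in> space M. \<bar>X x\<bar> \<ge> \<epsilon> * a (Suc n)})"
  have "K \<ge> 0"
    using C_nonneg suminf_nonneg[OF summable_weight weight_nonneg] by (simp add: K_def)
  have "(\<Sum>m\<in>{1..Q}. \<tau> m *
      (real m * (\<integral>x. (X x)^2 * indicator {y \<in> space M. \<bar>X y\<bar> < \<epsilon> * a m} x \<partial>M)
        / (\<epsilon>^2 * a m ^ 2)) powr \<theta>) \<le> K * (1 + L) powr \<theta>" for Q
  proof -
    have "(\<Sum>j\<in>{1..Q}. real j * \<tau> j * measure M {x \<in> space M. \<bar>X x\<bar> \<ge> \<epsilon> * a j}) \<le> L"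
      unfolding L_def sum.atLeast1_atMost_eq[folded One_nat_def]
      using tail_prob tau_nonneg by (intro sum_le_suminf) auto
    moreover have "0 \<le> (\<Sum>j\<in>{1..Q}. real j * \<tau> j * measure M {x \<in> space M. \<bar>X x\<bar> \<ge> \<epsilon> * a j})"
      using tau_nonneg by (intro sum_nonneg) auto
    moreover have "(\<Sum>m\<in>{1..Q}. \<tau> m *
        (real m * (\<integral>x. (X x)^2 * indicator {y \<in> space M. \<bar>X y\<bar> < \<epsilon> * a m} x \<partial>M)
          / (\<epsilon>^2 * a m ^ 2)) powr \<theta>)
        \<le> K * (1 + (\<Sum>j\<in>{1..Q}. real j * \<tau> j * measure M {x \<in> space M. \<bar>X x\<bar> \<ge> \<epsilon> * a j})) powr \<theta>"
      unfolding K_def using tail_head_estimate[OF _ \<delta>]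
      by (intro truncated_second_moments_le[OF M X \<epsilon>])
    ultimately show ?thesis
      using \<open>K \<ge> 0\<close> theta by (elim order_trans) (intro mult_left_mono powr_mono2; simp)
  qed
  then show ?thesis
    by blast
qed

end

theorem theorem2:
  fixes \<tau> a :: "nat \<Rightarrow> real" and \<theta> C :: real and N :: nat
    and M :: "'s measure" and X :: "'s \<Rightarrow> real"
  assumes tau_nonneg: "\<forall>n\<ge>1. \<tau> n \<ge> 0"
    and a_pos: "\<forall>n\<ge>1. a n > 0"
    and a_mono: "\<forall>n\<ge>1. a n \<le> a (Suc n)"
    and theta: "\<theta> \<ge> 1" and C: "C > 0" and N: "N \<ge> 2"
    and cond1: "\<forall>n\<ge>N.
        summable (\<lambda>i. real (i + n) powr \<theta> * \<tau> (i + n) / a (i + n) powr (2 * \<theta>)) \<and>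
        a n powr (2 * \<theta>) / real n powr (\<theta> - 1)
          * (\<Sum>i. real (i + n) powr \<theta> * \<tau> (i + n) / a (i + n) powr (2 * \<theta>))
        \<le> C * (\<Sum>k\<in>{1..<n}. real k * \<tau> k)"
    and cond2: "liminf (\<lambda>n. INF k\<in>{n..}.
        ereal (a k ^ 2 / (real k * a n ^ 2) * (\<Sum>j\<in>{1..<n}. real j * \<tau> j))) > 0"
    and P: "prob_space M"
    and X: "X \<in> borel_measurable M"
    and hypX: "\<forall>\<epsilon>>0. summable (\<lambda>n. real (Suc n) * \<tau> (Suc n) *
        measure M {x \<in> space M. \<bar>X x\<bar> \<ge> \<epsilon> * a (Suc n)})"
  shows "\<forall>\<epsilon>>0. summable (\<lambda>n. \<tau> (Suc n) *
        exp_neg_quot (\<epsilon>^2 * a (Suc n) ^ 2)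
          (real (Suc n) * (\<integral>x. (X x)^2 * indicator {y \<in> space M. \<bar>X y\<bar> < \<epsilon> * a (Suc n)} x \<partial>M)))"
proof (intro allI impI)
  fix \<epsilon> :: real assume \<epsilon>: "\<epsilon> > 0"
  interpret tail_head_condition \<tau> a \<theta> C N
  proof
    show "a m \<le> a n" if "1 \<le> m" "m \<le> n" for m n
      using a_mono that by (auto intro: lift_Suc_mono_le_ivl[of "{1..}"])
  qed (use tau_nonneg a_pos theta C cond1 in auto)
  obtain \<delta> where \<delta>: "\<delta> > 0" "\<forall>n\<ge>1. \<delta> * real n \<le> 1 + head_sum n"
    using head_sum_linear_lower_bound[OF cond2] by blast
  define T where "T m = (\<integral>x. (X x)^2 * indicator {y \<in> space M. \<bar>X y\<bar> < \<epsilon> * a m} x \<partial>M)" for m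
  obtain B where "\<And>Q. (\<Sum>m\<in>{1..Q}. \<tau> m * (real m * T m / (\<epsilon>^2 * a m ^ 2)) powr \<theta>) \<le> B"
    using truncated_moment_sums_bounded[OF P X \<epsilon> \<delta>] hypX \<epsilon> unfolding T_def by blast
  moreover have "T m \<ge> 0" for m
    unfolding T_def by (intro integral_nonneg_AE AE_I2) auto
  moreover have "\<epsilon>^2 * a m ^ 2 > 0" if "m \<ge> 1" for m
    using a_pos[OF that] \<epsilon> by simp
  ultimately show "summable (\<lambda>n. \<tau> (Suc n) * exp_neg_quot (\<epsilon>^2 * a (Suc n) ^ 2)
      (real (Suc n) * (\<integral>x. (X x)^2 * indicator {y \<in> space M. \<bar>X y\<bar> < \<epsilon> * a (Suc n)} x \<partial>M)))"
    unfolding T_def[symmetric] using theta tau_nonneg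
    by (intro summable_exp_neg_quot_of_powr_sums_bounded[where \<theta>=\<theta> and B=B]) auto
qed

end
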